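(* Let $(X,d)$ be a bounded metric space and $\lambda\ge0$. Let $\ell,k:X\to[0,+\infty)$ be lower semicontinuous functions with $\inf_X\ell=\inf_Xk=0$, and let $u,v:X\to\mathbb{R}$ be the Perron solutions of $(\mathcal{G}_\lambda)$ associated with $\ell$ and $k$, respectively. Then for every $\rho>0$, \[v(x)-u(x)\le(\rho+\|k-\ell\|_\infty)\,\mathrm{diam}(X)+\|k-\ell\|_\infty\frac{u(x)}{\rho}\quad\text{for all }x\in X.\]
   Context: $\mathrm{diam}(X)=\sup\{d(x,y):x,y\in X\}$; $\|f\|_\infty=\sup_X|f|$. Global slope: $G[u](x)=\sup_{y\neq x}\frac{(u(x)-u(y))_+}{d(x,y)}$ if $u(x)<+\infty$, $G[u](x)=+\infty$ otherwise. A solution of $(\mathcal{G}_\lambda)$ with data $\ell$ is a lower semicontinuous $u$ with $\inf_Xu=0$ and $\lambda u+G[u]=\ell$ on $X$; the Perron solution is the solution that is pointwise maximal among all solutions. *)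

theory Defs
  imports "HOL-Analysis.Analysis"
begin

definition lsc :: "('a::topological_space \<Rightarrow> real) \<Rightarrow> bool" where
  "lsc f \<longleftrightarrow> (\<forall>t. open {x. t < f x})"

text \<open>Global slope G[u](x) = sup over y \<noteq> x of (u x - u y)_+ / d(x,y), valued in ereal
  (it may be +\<infinity>); the supremum of the empty family of nonnegative reals is 0.\<close>
definition global_slope :: "('a::metric_space \<Rightarrow> real) \<Rightarrow> 'a \<Rightarrow> ereal" where
  "global_slope u x = Sup (insert 0 {ereal (max 0 (u x - u y) / dist x y) | y. y \<noteq> x})"

definition is_solution :: "real \<Rightarrow> ('a::metric_space \<Rightarrow> real) \<Rightarrow> ('a \<Rightarrow> real) \<Rightarrow> bool" where
  "is_solution lam l u \<longleftrightarrow> lsc u \<and> (INF x. ereal (u x)) = 0 \<and>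
     (\<forall>x. ereal (lam * u x) + global_slope u x = ereal (l x))"

definition is_perron_solution :: "real \<Rightarrow> ('a::metric_space \<Rightarrow> real) \<Rightarrow> ('a \<Rightarrow> real) \<Rightarrow> bool" where
  "is_perron_solution lam l u \<longleftrightarrow> is_solution lam l u \<and>
     (\<forall>w. is_solution lam l w \<longrightarrow> (\<forall>x. w x \<le> u x))"

definition sup_norm :: "('a \<Rightarrow> real) \<Rightarrow> ereal" where
  "sup_norm f = (SUP x. ereal \<bar>f x\<bar>)"

end

theory Submission
  imports Defs
begin

(*
  Subsolutions, lambda w + G[w] <= l, are the real functions with lambda w(x) <= l(x) and
  w(x) - w(y) <= (l(x) - lambda w(x)) d(x,y).  Those with infimum 0 are bounded by l diam X,
  and the pointwise supremum S of all of them is a solution: were the slope inequality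
  strict at z, lower semicontinuity of l would let a small cone max(S, S z + delta - M d(., z))
  raise S at z inside the family.  Hence the Perron solution u dominates every subsolution
  for l with infimum 0.

  With eps = ||k - l|| and D = diam X, the a priori bound v <= k D shows that
  w = rho/(rho + eps) (v - (rho + eps) D)_+ is positive only where k > rho + eps, and there
  rho k/(rho + eps) <= k - eps <= l.  So w is a subsolution for l, hence w <= u, which
  rearranges to the estimate.
*)

lemma INF_ereal_eq_0_iff:
  fixes g :: "'a \<Rightarrow> real"
  shows "(INF x. ereal (g x)) = 0 \<longleftrightarrow> (\<forall>x. 0 \<le> g x) \<and> (\<forall>e>0. \<exists>x. g x < e)"
proof
  assume inf: "(INF x. ereal (g x)) = 0"
  have "0 \<le> g x" for x
    using INF_lower[of x UNIV "\<lambda>x. ereal (g x)"] inf by simp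
  moreover have "\<exists>x. g x < e" if "e > 0" for e
  proof -
    have "(INF x. ereal (g x)) < ereal e" using that inf by simp
    then show ?thesis by (simp add: INF_less_iff)
  qed
  ultimately show "(\<forall>x. 0 \<le> g x) \<and> (\<forall>e>0. \<exists>x. g x < e)" by blast
next
  assume g: "(\<forall>x. 0 \<le> g x) \<and> (\<forall>e>0. \<exists>x. g x < e)"
  have "0 \<le> (INF x. ereal (g x))"
    using g by (simp add: le_INF_iff)
  moreover have "(INF x. ereal (g x)) \<le> 0"
  proof (rule ereal_le_epsilon2)
    fix e :: real assume "e > 0"
    then obtain x where "g x < e" using g by blast
    have "(INF x. ereal (g x)) \<le> ereal (g x)"
      by (rule INF_lower) simp
    also have "\<dots> \<le> 0 + ereal e"
      using \<open>g x < e\<close> by simp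
    finally show "(INF x. ereal (g x)) \<le> 0 + ereal e" .
  qed
  ultimately show "(INF x. ereal (g x)) = 0" by simp
qed

lemma global_slope_nonneg: "0 \<le> global_slope u x"
  unfolding global_slope_def by (rule Sup_upper) simp

lemma global_slope_le_iff:
  assumes "0 \<le> L"
  shows "global_slope u x \<le> ereal L \<longleftrightarrow> (\<forall>y. u x - u y \<le> L * dist x y)"
proof -
  have quotient_le: "ereal (max 0 (u x - u y) / dist x y) \<le> ereal L \<longleftrightarrow> u x - u y \<le> L * dist x y"
    if "y \<noteq> x" for y
    using that assms by (auto simp: divide_le_eq)
  have "global_slope u x \<le> ereal L \<longleftrightarrow> (\<forall>y. y \<noteq> x \<longrightarrow> u x - u y \<le> L * dist x y)"
    unfolding global_slope_def Sup_le_iff using assms quotient_le by auto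
  also have "\<dots> \<longleftrightarrow> (\<forall>y. u x - u y \<le> L * dist x y)"
    by (metis diff_self dist_self mult_zero_right order_refl)
  finally show ?thesis .
qed

section \<open>Subsolutions\<close>

definition is_subsolution :: "real \<Rightarrow> ('a::metric_space \<Rightarrow> real) \<Rightarrow> ('a \<Rightarrow> real) \<Rightarrow> bool" where
  "is_subsolution lam l w \<longleftrightarrow>
     (\<forall>x. lam * w x \<le> l x \<and> (\<forall>y. w x - w y \<le> (l x - lam * w x) * dist x y))"

lemma is_subsolution_iff_global_slope:
  "is_subsolution lam l w \<longleftrightarrow> (\<forall>x. ereal (lam * w x) + global_slope w x \<le> ereal (l x))"
proof -
  have "ereal (lam * w x) + global_slope w x \<le> ereal (l x) \<longleftrightarrow>
      lam * w x \<le> l x \<and> (\<forall>y. w x - w y \<le> (l x - lam * w x) * dist x y)" for x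
  proof -
    have "ereal (lam * w x) + global_slope w x \<le> ereal (l x) \<longleftrightarrow>
        lam * w x \<le> l x \<and> global_slope w x \<le> ereal (l x - lam * w x)"
      using global_slope_nonneg[of w x] by (cases "global_slope w x") auto
    also have "\<dots> \<longleftrightarrow> lam * w x \<le> l x \<and> (\<forall>y. w x - w y \<le> (l x - lam * w x) * dist x y)"
      using global_slope_le_iff[of "l x - lam * w x" w x] by auto
    finally show ?thesis .
  qed
  then show ?thesis
    unfolding is_subsolution_def by blast
qed

lemma is_solution_imp_subsolution: "is_solution lam l w \<Longrightarrow> is_subsolution lam l w"
  unfolding is_solution_def is_subsolution_iff_global_slope by simp

lemma le_diameter_if_slope_le:
  fixes w :: "'a::metric_space \<Rightarrow> real"
  assumes "bounded (UNIV :: 'a set)" "(INF y. ereal (w y)) = 0" "0 \<le> L"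
    and "\<forall>y. w x - w y \<le> L * dist x y"
  shows "w x \<le> L * diameter (UNIV :: 'a set)"
proof (rule ccontr)
  assume "\<not> ?thesis"
  then have "0 < w x - L * diameter (UNIV :: 'a set)"
    by simp
  then obtain y where "w y < w x - L * diameter (UNIV :: 'a set)"
    using assms(2) unfolding INF_ereal_eq_0_iff by blast
  moreover have "L * dist x y \<le> L * diameter (UNIV :: 'a set)"
    using assms(1,3) by (simp add: diameter_bounded_bound mult_left_mono)
  moreover have "w x - w y \<le> L * dist x y"
    using assms(4) by blast
  ultimately show False
    by linarith
qed

lemma subsolution_le_diameter:
  fixes w :: "'a::metric_space \<Rightarrow> real"
  assumes "bounded (UNIV :: 'a set)" "0 \<le> lam" "is_subsolution lam l w" "(INF y. ereal (w y)) = 0"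
  shows "w x \<le> l x * diameter (UNIV :: 'a set)"
proof -
  have "0 \<le> lam * w x"
    using assms(2,4) by (simp add: INF_ereal_eq_0_iff)
  moreover have "w x \<le> (l x - lam * w x) * diameter (UNIV :: 'a set)"
    using assms by (intro le_diameter_if_slope_le) (auto simp: is_subsolution_def)
  ultimately show ?thesis
    using diameter_ge_0[OF assms(1)] by (smt (verit) mult_right_mono)
qed

lemma subsolution_imp_lsc:
  assumes "is_subsolution lam l w"
  shows "lsc w"
  unfolding lsc_def open_dist
proof (intro allI ballI)
  fix t z assume "z \<in> {x. t < w x}"
  then have tz: "t < w z" by simp
  define L where "L = l z - lam * w z"
  have L0: "0 \<le> L" and slope: "\<And>y. w z - w y \<le> L * dist z y"
    using assms unfolding is_subsolution_def L_def by auto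
  define r where "r = (w z - t) / (L + 1)"
  have r: "0 < r" "(L + 1) * r = w z - t"
    using tz L0 by (simp_all add: r_def)
  have "t < w y" if "dist y z < r" for y
  proof -
    have "w z - w y \<le> L * r"
      using slope[of y] that L0 by (smt (verit) dist_commute mult_left_mono)
    also have "\<dots> < (L + 1) * r"
      using r(1) by simp
    finally show ?thesis
      using r(2) by simp
  qed
  with r(1) show "\<exists>r>0. \<forall>y. dist y z < r \<longrightarrow> y \<in> {x. t < w x}"
    by auto
qed

lemma subsolution_SUP:
  assumes "0 \<le> lam" "F \<noteq> {}" "\<forall>f\<in>F. is_subsolution lam l f" "\<forall>x. bdd_above ((\<lambda>f. f x) ` F)"
  shows "is_subsolution lam l (\<lambda>x. SUP f\<in>F. f x)"
  unfolding is_subsolution_def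
proof (intro allI conjI)
  fix x y
  let ?S = "\<lambda>x. SUP f\<in>F. f x"
  have sub: "lam * f x \<le> l x" "f x - f y \<le> (l x - lam * f x) * dist x y" if "f \<in> F" for f
    using assms(3) that unfolding is_subsolution_def by auto
  have upper: "f y \<le> ?S y" if "f \<in> F" for f
    using assms(4) that by (intro cSUP_upper) auto
  show "lam * ?S x \<le> l x"
  proof (cases "lam = 0")
    case True
    then show ?thesis
      using sub(1) assms(2) by force
  next
    case False
    then have "?S x \<le> l x / lam"
      using assms(1,2) sub(1) by (intro cSUP_least) (auto simp: le_divide_eq mult.commute)
    then show ?thesis
      using False assms(1) by (simp add: le_divide_eq mult.commute)
  qed
  have pos: "0 < 1 + lam * dist x y"
    using assms(1) by (simp add: add_pos_nonneg)
  have "?S x \<le> (?S y + l x * dist x y) / (1 + lam * dist x y)"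
  proof (intro cSUP_least)
    fix f assume "f \<in> F"
    then have "f x * (1 + lam * dist x y) \<le> ?S y + l x * dist x y"
      using sub[of f] upper[of f] by (simp add: algebra_simps)
    then show "f x \<le> (?S y + l x * dist x y) / (1 + lam * dist x y)"
      using pos by (simp add: pos_le_divide_eq)
  qed (use assms(2) in auto)
  then have "?S x * (1 + lam * dist x y) \<le> ?S y + l x * dist x y"
    using pos by (simp add: pos_le_divide_eq)
  then show "?S x - ?S y \<le> (l x - lam * ?S x) * dist x y"
    by (simp add: algebra_simps)
qed

lemma subsolution_max:
  assumes "is_subsolution lam l w"
    and "\<And>x. w x < \<phi> x \<Longrightarrow> lam * \<phi> x \<le> l x \<and> (\<forall>y. \<phi> x - \<phi> y \<le> (l x - lam * \<phi> x) * dist x y)"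
  shows "is_subsolution lam l (\<lambda>x. max (w x) (\<phi> x))"
  unfolding is_subsolution_def
proof (intro allI)
  fix x
  show "lam * max (w x) (\<phi> x) \<le> l x \<and>
    (\<forall>y. max (w x) (\<phi> x) - max (w y) (\<phi> y) \<le> (l x - lam * max (w x) (\<phi> x)) * dist x y)"
  proof (cases "w x < \<phi> x")
    case True
    have "\<phi> x - max (w y) (\<phi> y) \<le> (l x - lam * \<phi> x) * dist x y" for y
      using assms(2)[OF True] by (smt (verit, best))
    then show ?thesis
      using assms(2)[OF True] True by simp
  next
    case False
    have "w x - max (w y) (\<phi> y) \<le> (l x - lam * w x) * dist x y" for y
      using assms(1) unfolding is_subsolution_def by (smt (verit, best))
    then show ?thesis
      using assms(1) False unfolding is_subsolution_def by simp
  qed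
qed

section \<open>The Perron envelope\<close>

(* The a priori bound of subsolution_le_diameter is built in: it keeps the family pointwise
   bounded and its supremum of infimum 0. *)
definition admissible_subsolution :: "real \<Rightarrow> ('a::metric_space \<Rightarrow> real) \<Rightarrow> ('a \<Rightarrow> real) \<Rightarrow> bool" where
  "admissible_subsolution lam l w \<longleftrightarrow>
     is_subsolution lam l w \<and> (\<forall>x. 0 \<le> w x \<and> w x \<le> l x * diameter (UNIV :: 'a set))"

lemma subsolution_max_cone:
  assumes "0 \<le> lam" "0 \<le> M" "is_subsolution lam l S"
    and "\<And>y. S y < a - M * dist y z \<Longrightarrow> lam * (a - M * dist y z) \<le> l y - M"
  shows "is_subsolution lam l (\<lambda>y. max (S y) (a - M * dist y z))"
proof (rule subsolution_max[OF assms(3)])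
  fix y assume above: "S y < a - M * dist y z"
  have "(a - M * dist y z) - (a - M * dist y' z) \<le> M * dist y y'" for y'
    using assms(2) dist_triangle[of y' z y]
    by (simp add: dist_commute mult_left_mono flip: right_diff_distrib)
  also have "M * dist y y' \<le> (l y - lam * (a - M * dist y z)) * dist y y'" for y'
    using assms(4)[OF above] by (intro mult_right_mono) auto
  finally show "lam * (a - M * dist y z) \<le> l y \<and>
      (\<forall>y'. a - M * dist y z - (a - M * dist y' z) \<le> (l y - lam * (a - M * dist y z)) * dist y y')"
    using assms(2) assms(4)[OF above] by auto
qed

lemma admissible_subsolution_bump:
  fixes S l :: "'a::metric_space \<Rightarrow> real"
  assumes bnd: "bounded (UNIV :: 'a set)" and D: "0 < diameter (UNIV :: 'a set)"
    and lam: "0 \<le> lam" and lscl: "lsc l"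
    and S: "admissible_subsolution lam l S" and infS: "(INF y. ereal (S y)) = 0"
    and g0: "0 \<le> g" and Sg: "\<forall>y. S z - S y \<le> g * dist z y" and gL: "g < l z - lam * S z"
  shows "\<exists>S'. admissible_subsolution lam l S' \<and> S z < S' z"
proof -
  define D where "D = diameter (UNIV :: 'a set)"
  have Ssub: "is_subsolution lam l S" and S0: "\<And>y. 0 \<le> S y" and SD: "\<And>y. S y \<le> l y * D"
    using S unfolding admissible_subsolution_def D_def by auto
  have SgD: "S z \<le> g * D"
    unfolding D_def using le_diameter_if_slope_le[OF bnd infS g0 Sg] .
  define \<eta> where "\<eta> = (l z - lam * S z - g) / 2"
  define M where "M = g + \<eta>"
  have \<eta>: "0 < \<eta>" and M0: "0 \<le> M" and lM: "M + \<eta> + lam * S z = l z"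
    using gL g0 by (auto simp: \<eta>_def M_def)
  have "open {y. l z - \<eta> / 2 < l y}"
    using lscl unfolding lsc_def by blast
  then obtain r where r: "0 < r" "\<And>y. dist y z < r \<Longrightarrow> l z - \<eta> / 2 < l y"
    unfolding open_dist using \<eta> by fastforce
  \<comment> \<open>The cone below rises above S only within distance r of z, where l stays above l z - eta/2,
    and at most by delta, which keeps it below l D and leaves room for the term lam delta.\<close>
  obtain \<delta> where \<delta>: "0 < \<delta>" "\<delta> * (2 * (lam + 1)) \<le> \<eta>" "\<delta> < r * \<eta>" "\<delta> \<le> \<eta> * D"
  proof -
    define m where "m = min (\<eta> / (2 * (lam + 1))) (min (r * \<eta>) (\<eta> * D))"
    have m: "m \<le> \<eta> / (2 * (lam + 1))" "m \<le> r * \<eta>" "m \<le> \<eta> * D"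
      unfolding m_def by (meson min.cobounded1 min.cobounded2 order_trans)+
    have "0 < m"
      using \<eta> r D lam unfolding m_def D_def by simp
    moreover have "m * (2 * (lam + 1)) \<le> \<eta>"
      using m(1) lam by (simp add: le_divide_eq)
    ultimately show thesis
      using m(2,3) \<eta> lam by (intro that[of "m / 2"]) (auto simp: algebra_simps)
  qed
  define cone where "cone y = S z + \<delta> - M * dist y z" for y
  define S' where "S' y = max (S y) (cone y)" for y
  have near: "l z - \<eta> / 2 < l y" if "S y < cone y" for y
  proof -
    have "S z - S y \<le> g * dist y z"
      using Sg by (simp add: dist_commute)
    then have "\<eta> * dist y z < \<eta> * r"
      using that \<delta>(3) by (simp add: cone_def M_def algebra_simps)
    then show ?thesis
      using r(2) \<eta> by simp
  qed
  have "lam * cone y \<le> l y - M" if "S y < cone y" for y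
  proof -
    have "lam * cone y \<le> lam * (S z + \<delta>)"
      using lam M0 by (simp add: cone_def mult_left_mono)
    also have "\<dots> \<le> lam * S z + \<eta> / 2"
      using \<delta>(1,2) by (simp add: algebra_simps)
    finally show ?thesis
      using near[OF that] lM by simp
  qed
  then have "is_subsolution lam l S'"
    unfolding S'_def cone_def by (intro subsolution_max_cone[OF lam M0 Ssub]) (simp add: cone_def)
  moreover have "0 \<le> S' y \<and> S' y \<le> l y * D" for y
  proof (cases "S y < cone y")
    case True
    have "cone y \<le> S z + \<delta>"
      using M0 by (simp add: cone_def)
    also have "\<dots> \<le> M * D"
      using SgD \<delta>(4) by (simp add: M_def algebra_simps)
    also have "\<dots> \<le> l y * D"
      using near[OF True] lM \<eta> mult_nonneg_nonneg[OF lam S0[of z]] D by (simp add: D_def mult_right_mono)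
    finally show ?thesis
      using True S0[of y] by (simp add: S'_def)
  qed (use S0 SD in \<open>auto simp: S'_def\<close>)
  moreover have "S z < S' z"
    using \<delta>(1) by (simp add: S'_def cone_def)
  ultimately show ?thesis
    unfolding admissible_subsolution_def D_def by blast
qed

lemma maximal_admissible_subsolution_solves:
  fixes S l :: "'a::metric_space \<Rightarrow> real"
  assumes bnd: "bounded (UNIV :: 'a set)" and D: "0 < diameter (UNIV :: 'a set)"
    and lam: "0 \<le> lam" and lscl: "lsc l"
    and S: "admissible_subsolution lam l S" and infS: "(INF y. ereal (S y)) = 0"
    and maximal: "\<And>w. admissible_subsolution lam l w \<Longrightarrow> w z \<le> S z"
  shows "ereal (lam * S z) + global_slope S z = ereal (l z)"
proof (rule antisym)
  show "ereal (lam * S z) + global_slope S z \<le> ereal (l z)"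
    using S unfolding admissible_subsolution_def is_subsolution_iff_global_slope by blast
  have "ereal (l z - lam * S z) \<le> global_slope S z"
  proof (rule ccontr)
    assume "\<not> ?thesis"
    then have "global_slope S z < ereal (l z - lam * S z)"
      by simp
    then obtain g where g: "global_slope S z < ereal g" "g < l z - lam * S z"
      using ereal_dense2 by fastforce
    have g0: "0 \<le> g"
      using global_slope_nonneg[of S z] g(1) by (metis ereal_less_eq(3) less_imp_le order_trans zero_ereal_def)
    have "\<forall>y. S z - S y \<le> g * dist z y"
      using global_slope_le_iff[OF g0, of S z] g(1) by (simp add: less_imp_le)
    then show False
      using admissible_subsolution_bump[OF bnd D lam lscl S infS g0 _ g(2)] maximal by force
  qed
  then have "ereal (lam * S z) + ereal (l z - lam * S z) \<le> ereal (lam * S z) + global_slope S z"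
    by (rule add_left_mono)
  then show "ereal (l z) \<le> ereal (lam * S z) + global_slope S z"
    by simp
qed

definition perron_envelope :: "real \<Rightarrow> ('a::metric_space \<Rightarrow> real) \<Rightarrow> 'a \<Rightarrow> real" where
  "perron_envelope lam l y = (SUP f\<in>{f. admissible_subsolution lam l f}. f y)"

lemma bdd_above_admissible_subsolutions:
  "bdd_above ((\<lambda>f. f y) ` {f. admissible_subsolution lam l f})"
  by (rule bdd_aboveI[of _ "l y * diameter UNIV"]) (auto simp: admissible_subsolution_def)

lemma admissible_subsolution_le_perron_envelope:
  assumes "admissible_subsolution lam l w"
  shows "w y \<le> perron_envelope lam l y"
  unfolding perron_envelope_def
  using assms bdd_above_admissible_subsolutions by (intro cSUP_upper) auto

lemma perron_envelope_admissible:
  assumes lam: "0 \<le> lam" and w: "admissible_subsolution lam l w"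
  shows "admissible_subsolution lam l (perron_envelope lam l)"
proof -
  let ?F = "{f. admissible_subsolution lam l f}"
  have "is_subsolution lam l (perron_envelope lam l)"
    unfolding perron_envelope_def
  proof (rule subsolution_SUP[OF lam])
    show "?F \<noteq> {}" and "\<forall>f\<in>?F. is_subsolution lam l f"
      using w by (auto simp: admissible_subsolution_def)
    show "\<forall>y. bdd_above ((\<lambda>f. f y) ` ?F)"
      by (intro allI bdd_above_admissible_subsolutions)
  qed
  moreover have "0 \<le> perron_envelope lam l y" for y
    using w admissible_subsolution_le_perron_envelope[OF w, of y]
    by (auto simp: admissible_subsolution_def intro: order_trans)
  moreover have "perron_envelope lam l y \<le> l y * diameter (UNIV :: 'a set)" for y
    unfolding perron_envelope_def
    by (rule cSUP_least) (use w in \<open>auto simp: admissible_subsolution_def\<close>)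
  ultimately show ?thesis
    unfolding admissible_subsolution_def by blast
qed

lemma perron_envelope_is_solution:
  fixes l :: "'a::metric_space \<Rightarrow> real"
  assumes bnd: "bounded (UNIV :: 'a set)" and D: "0 < diameter (UNIV :: 'a set)"
    and lam: "0 \<le> lam" and lscl: "lsc l" and infl: "(INF y. ereal (l y)) = 0"
    and w: "admissible_subsolution lam l w"
  shows "is_solution lam l (perron_envelope lam l)"
proof -
  let ?S = "perron_envelope lam l"
  have S: "admissible_subsolution lam l ?S"
    using perron_envelope_admissible[OF lam w] .
  have "\<exists>y. ?S y < e" if e: "0 < e" for e
  proof -
    obtain y where "l y < e / diameter (UNIV :: 'a set)"
      using infl D e unfolding INF_ereal_eq_0_iff by (meson divide_pos_pos)
    then have "l y * diameter (UNIV :: 'a set) < e"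
      using D by (simp add: pos_less_divide_eq)
    then show ?thesis
      using S unfolding admissible_subsolution_def by (meson le_less_trans)
  qed
  then have infS: "(INF y. ereal (?S y)) = 0"
    using S unfolding INF_ereal_eq_0_iff admissible_subsolution_def by blast
  have "ereal (lam * ?S z) + global_slope ?S z = ereal (l z)" for z
    using maximal_admissible_subsolution_solves[OF bnd D lam lscl S infS]
      admissible_subsolution_le_perron_envelope by blast
  then show ?thesis
    using S subsolution_imp_lsc infS unfolding is_solution_def admissible_subsolution_def by blast
qed

lemma subsolution_le_perron_solution:
  fixes l u w :: "'a::metric_space \<Rightarrow> real"
  assumes bnd: "bounded (UNIV :: 'a set)" and lam: "0 \<le> lam" and lscl: "lsc l"
    and infl: "(INF y. ereal (l y)) = 0" and u: "is_perron_solution lam l u"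
    and w: "is_subsolution lam l w" and infw: "(INF y. ereal (w y)) = 0"
  shows "w x \<le> u x"
proof -
  have u0: "0 \<le> u x"
    using u unfolding is_perron_solution_def is_solution_def by (simp add: INF_ereal_eq_0_iff)
  have wD: "w y \<le> l y * diameter (UNIV :: 'a set)" for y
    using subsolution_le_diameter[OF bnd lam w infw] .
  show ?thesis
  proof (cases "diameter (UNIV :: 'a set) = 0")
    case True
    then show ?thesis
      using wD[of x] u0 by simp
  next
    case False
    then have D: "0 < diameter (UNIV :: 'a set)"
      using diameter_ge_0[OF bnd] by simp
    have adm: "admissible_subsolution lam l w"
      using w infw wD unfolding admissible_subsolution_def INF_ereal_eq_0_iff by blast
    then have "perron_envelope lam l x \<le> u x"
      using perron_envelope_is_solution[OF bnd D lam lscl infl] u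
      unfolding is_perron_solution_def by blast
    with admissible_subsolution_le_perron_envelope[OF adm, of x] show ?thesis
      by linarith
  qed
qed

section \<open>Comparison of Perron solutions\<close>

lemma ratio_mult_le_of_le_add:
  fixes \<rho> e k l :: real
  assumes "0 < \<rho>" "0 \<le> e" "\<rho> + e \<le> k" "k \<le> l + e"
  shows "\<rho> / (\<rho> + e) * k \<le> l"
proof -
  have "\<rho> * k \<le> \<rho> * k + e * (k - \<rho> - e)"
    using assms(2,3) by simp
  also have "\<dots> = (\<rho> + e) * (k - e)"
    by (simp add: algebra_simps)
  also have "\<dots> \<le> (\<rho> + e) * l"
    using assms by (simp add: mult_left_mono add.commute diff_le_eq)
  finally show ?thesis
    using assms(1,2) by (simp add: field_simps)
qed

lemma truncated_rescaled_subsolution: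
  fixes k l v :: "'a::metric_space \<Rightarrow> real"
  assumes bnd: "bounded (UNIV :: 'a set)" and lam: "0 \<le> lam"
    and v: "is_subsolution lam k v" and infv: "(INF y. ereal (v y)) = 0"
    and l0: "\<forall>x. 0 \<le> l x" and kl: "\<forall>x. k x \<le> l x + e" and e: "0 \<le> e" and \<rho>: "0 < \<rho>"
  shows "is_subsolution lam l
           (\<lambda>x. max 0 (\<rho> / (\<rho> + e) * (v x - (\<rho> + e) * diameter (UNIV :: 'a set))))"
proof -
  define D where "D = diameter (UNIV :: 'a set)"
  define c where "c = (\<rho> + e) * D"
  define t where "t = \<rho> / (\<rho> + e)"
  have t: "0 < t" and c0: "0 \<le> c"
    using \<rho> e diameter_ge_0[OF bnd] by (simp_all add: t_def c_def D_def)
  have zero: "is_subsolution lam l (\<lambda>_. 0)"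
    using l0 by (simp add: is_subsolution_def)
  have "lam * (t * (v x - c)) \<le> l x \<and>
      (\<forall>y. t * (v x - c) - t * (v y - c) \<le> (l x - lam * (t * (v x - c))) * dist x y)"
    if "0 < t * (v x - c)" for x
  proof -
    have "(\<rho> + e) * D < k x * D"
      using that t subsolution_le_diameter[OF bnd lam v infv, of x]
      by (simp add: c_def D_def zero_less_mult_iff)
    then have k_large: "\<rho> + e \<le> k x"
      using diameter_ge_0[OF bnd] by (simp add: D_def mult_less_cancel_right)
    have tk: "t * k x \<le> l x"
      unfolding t_def using ratio_mult_le_of_le_add[OF \<rho> e k_large] kl by blast
    have vx: "lam * v x \<le> k x" "\<And>y. v x - v y \<le> (k x - lam * v x) * dist x y"
      using v unfolding is_subsolution_def by auto
    have lam_shift: "lam * (t * (v x - c)) \<le> t * lam * v x"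
      using lam t c0 by (simp add: algebra_simps mult_nonneg_nonneg)
    have "t * (lam * v x) \<le> t * k x"
      using vx(1) t by simp
    then have lam_bound: "lam * (t * (v x - c)) \<le> l x"
      using lam_shift tk by (simp add: mult.assoc)
    have "t * (v x - c) - t * (v y - c) \<le> (l x - lam * (t * (v x - c))) * dist x y" for y
    proof -
      have "t * (v x - c) - t * (v y - c) = t * (v x - v y)"
        by (simp add: algebra_simps)
      also have "\<dots> \<le> (t * k x - t * lam * v x) * dist x y"
        using mult_left_mono[OF vx(2)[of y], of t] t by (simp add: algebra_simps)
      also have "\<dots> \<le> (l x - lam * (t * (v x - c))) * dist x y"
        using tk lam_shift by (intro mult_right_mono) auto
      finally show ?thesis .
    qed
    with lam_bound show ?thesis
      by blast
  qed
  then show ?thesis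
    using subsolution_max[OF zero, of "\<lambda>x. t * (v x - c)"] by (simp add: t_def c_def D_def)
qed

lemma solution_minus_perron_solution_le:
  fixes l k u v :: "'a::metric_space \<Rightarrow> real"
  assumes bnd: "bounded (UNIV :: 'a set)" and lam: "0 \<le> lam" and lscl: "lsc l"
    and infl: "(INF y. ereal (l y)) = 0"
    and u: "is_perron_solution lam l u" and v: "is_solution lam k v"
    and e: "0 \<le> e" and kl: "\<forall>x. k x \<le> l x + e" and \<rho>: "0 < \<rho>"
  shows "v x - u x \<le> (\<rho> + e) * diameter (UNIV :: 'a set) + e * (u x / \<rho>)"
proof -
  define c where "c = (\<rho> + e) * diameter (UNIV :: 'a set)"
  define t where "t = \<rho> / (\<rho> + e)"
  define w where "w y = max 0 (t * (v y - c))" for y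
  have infv: "(INF y. ereal (v y)) = 0"
    using v unfolding is_solution_def by blast
  have l0: "\<forall>y. 0 \<le> l y"
    using infl unfolding INF_ereal_eq_0_iff by blast
  have wsub: "is_subsolution lam l w"
    using truncated_rescaled_subsolution[OF bnd lam is_solution_imp_subsolution[OF v] infv l0 kl e \<rho>]
    unfolding w_def t_def c_def .
  have "w y \<le> v y" for y
  proof -
    have "0 \<le> v y" "0 \<le> c" "0 < t" "t \<le> 1"
      using infv \<rho> e diameter_ge_0[OF bnd] unfolding INF_ereal_eq_0_iff
      by (auto simp: c_def t_def)
    then have "t * (v y - c) \<le> t * v y" "t * v y \<le> v y"
      by (simp_all add: right_diff_distrib mult_left_le_one_le)
    then show ?thesis
      unfolding w_def using \<open>0 \<le> v y\<close> by linarith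
  qed
  then have infw: "(INF y. ereal (w y)) = 0"
    using infv unfolding INF_ereal_eq_0_iff w_def by (meson le_less_trans max.cobounded1)
  have "t * (v x - c) \<le> u x"
    using subsolution_le_perron_solution[OF bnd lam lscl infl u wsub infw, of x]
    by (simp add: w_def)
  then have "\<rho> * (v x - c) \<le> (\<rho> + e) * u x"
    using \<rho> e by (simp add: t_def pos_divide_le_eq mult.commute)
  then have "v x - c \<le> (\<rho> + e) * u x / \<rho>"
    using \<rho> by (simp add: pos_le_divide_eq mult.commute)
  also have "\<dots> = u x + e * (u x / \<rho>)"
    using \<rho> by (simp add: field_simps)
  finally show ?thesis
    by (simp add: c_def)
qed

lemma solution_minus_perron_solution_le_ereal:
  fixes l k u v :: "'a::metric_space \<Rightarrow> real"
  assumes bnd: "bounded (UNIV :: 'a set)" and lam: "0 \<le> lam" and lscl: "lsc l"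
    and infl: "(INF y. ereal (l y)) = 0"
    and u: "is_perron_solution lam l u" and v: "is_solution lam k v"
    and kl: "\<forall>y. ereal \<bar>k y - l y\<bar> \<le> \<epsilon>" and \<rho>: "0 < \<rho>"
  shows "ereal (v x - u x) \<le>
           (ereal \<rho> + \<epsilon>) * ereal (diameter (UNIV :: 'a set)) + \<epsilon> * ereal (u x / \<rho>)"
proof -
  define D where "D = diameter (UNIV :: 'a set)"
  have u0: "0 \<le> u x"
    using u unfolding is_perron_solution_def is_solution_def INF_ereal_eq_0_iff by auto
  show ?thesis
  proof (cases \<epsilon>)
    case (real e)
    have kle: "\<bar>k y - l y\<bar> \<le> e" for y
      using kl real by simp
    have "0 \<le> e"
      using kle[of x] by (meson abs_ge_zero order_trans)
    moreover have "\<forall>y. k y \<le> l y + e"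
      using kle by (metis abs_le_D1 add.commute diff_le_eq)
    ultimately have "v x - u x \<le> (\<rho> + e) * D + e * (u x / \<rho>)"
      unfolding D_def using solution_minus_perron_solution_le[OF bnd lam lscl infl u v _ _ \<rho>] by blast
    then show ?thesis
      using real by (simp add: D_def)
  next
    case PInf
    have nonneg: "0 \<le> \<epsilon> * ereal (u x / \<rho>)"
      using PInf u0 \<rho> by (simp add: ereal_zero_le_0_iff)
    show ?thesis
    proof (cases "D = 0")
      case True
      \<comment> \<open>Here the right-hand side is 0 even though eps = \<infinity>, since \<infinity> * 0 = 0 in ereal.\<close>
      have "v x \<le> k x * D"
        using subsolution_le_diameter[OF bnd lam is_solution_imp_subsolution] v
        unfolding is_solution_def D_def by blast
      then have "ereal (v x - u x) \<le> 0"
        using True u0 by simp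
      then have "ereal (v x - u x) \<le> \<epsilon> * ereal (u x / \<rho>)"
        using nonneg by (rule order_trans)
      then show ?thesis
        using True by (simp add: D_def zero_ereal_def[symmetric])
    next
      case False
      then have "0 < D"
        using diameter_ge_0[OF bnd] by (simp add: D_def)
      then show ?thesis
        using PInf nonneg by (simp add: D_def)
    qed
  next
    case MInf
    then show ?thesis
      using kl by simp
  qed
qed

theorem lemma5p3:
  fixes lam :: real and l k u v :: "'a::metric_space \<Rightarrow> real"
  assumes "bounded (UNIV :: 'a set)"
    and "lam \<ge> 0"
    and "\<forall>x. l x \<ge> 0" and "\<forall>x. k x \<ge> 0"
    and "lsc l" and "lsc k"
    and "(INF x. ereal (l x)) = 0" and "(INF x. ereal (k x)) = 0"
    and "is_perron_solution lam l u" and "is_perron_solution lam k v"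
  shows "\<forall>\<rho>>0. \<forall>x. ereal (v x - u x) \<le>
            (ereal \<rho> + sup_norm (\<lambda>y. k y - l y)) * ereal (diameter (UNIV :: 'a set))
            + sup_norm (\<lambda>y. k y - l y) * ereal (u x / \<rho>)"
proof (intro allI impI)
  fix \<rho> :: real and x :: 'a
  assume "0 < \<rho>"
  have "\<forall>y. ereal \<bar>k y - l y\<bar> \<le> sup_norm (\<lambda>y. k y - l y)"
    unfolding sup_norm_def by (intro allI SUP_upper) simp
  moreover have "is_solution lam k v"
    using assms(10) unfolding is_perron_solution_def by blast
  ultimately show "ereal (v x - u x) \<le>
      (ereal \<rho> + sup_norm (\<lambda>y. k y - l y)) * ereal (diameter (UNIV :: 'a set))
      + sup_norm (\<lambda>y. k y - l y) * ereal (u x / \<rho>)"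
    using solution_minus_perron_solution_le_ereal[OF assms(1,2,5,7,9)] \<open>0 < \<rho>\<close> by blast
qed

end
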